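(* Let $(X,p)$ be a complete partial metric space, let $x_o\in X$, and let $f:X\to X$ be a Cauchy function at $x_o$. If $f$ is non-expansive and weakly orbitally continuous at $x_o$, then $f$ has a fixed point.
   Context: A partial metric on $X$ is $p:X\times X\to\mathbb{R}$ with, for all $x,y,z$: $p(x,x)\le p(x,y)$; $p(x,y)=p(y,x)$; $p(x,x)=p(x,y)=p(y,y)$ iff $x=y$; $p(x,y)\le p(x,z)+p(z,y)-p(z,z)$. The topology on $X$ is generated by the balls $\{y\mid p(x,y)-p(x,x)<\epsilon\}$, so $a$ is a limit of $\{x_i\}$ iff for every $\epsilon>0$ there is $N$ with $p(a,x_i)-p(a,a)<\epsilon$ for all $i>N$. A sequence $\{x_i\}$ is Cauchy with central distance $r\in\mathbb{R}$ if for every $\epsilon>0$ there is $N$ with $|p(x_i,x_j)-r|<\epsilon$ for all $i\ge j>N$. A special limit of such a sequence is a limit $a$ with $p(a,a)=r$. $(X,p)$ is complete if every Cauchy sequence has a special limit. $f$ is a Cauchy function at $x_o$ if the orbit $\{f^i(x_o)\}_{i\in\mathbb{N}}$ ($f^0(x_o)=x_o$, $f^{i+1}(x_o)=f(f^i(x_o))$) is Cauchy. $f$ is non-expansive if $p(f(x),f(y))\le p(x,y)$ for all $x,y$. $f$ is weakly orbitally continuous at $x_o$ if whenever $a$ is a special limit of $\{f^i(x_o)\}$, $f(a)$ is a limit of $\{f^i(x_o)\}$. *)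

theory Defs
  imports Main "HOL.Real"
begin

definition partial_metric :: "('a \<Rightarrow> 'a \<Rightarrow> real) \<Rightarrow> bool" where
  "partial_metric p \<longleftrightarrow>
     (\<forall>x y. p x x \<le> p x y) \<and>
     (\<forall>x y. p x y = p y x) \<and>
     (\<forall>x y. (p x x = p x y \<and> p x y = p y y) \<longleftrightarrow> x = y) \<and>
     (\<forall>x y z. p x y \<le> p x z + p z y - p z z)"

definition pm_limit :: "('a \<Rightarrow> 'a \<Rightarrow> real) \<Rightarrow> (nat \<Rightarrow> 'a) \<Rightarrow> 'a \<Rightarrow> bool" where
  "pm_limit p xs a \<longleftrightarrow>
     (\<forall>\<epsilon>>0. \<exists>N. \<forall>i>N. p a (xs i) - p a a < \<epsilon>)"

definition pm_cauchy_central :: "('a \<Rightarrow> 'a \<Rightarrow> real) \<Rightarrow> (nat \<Rightarrow> 'a) \<Rightarrow> real \<Rightarrow> bool" where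
  "pm_cauchy_central p xs r \<longleftrightarrow>
     (\<forall>\<epsilon>>0. \<exists>N. \<forall>i j. i \<ge> j \<and> j > N \<longrightarrow> \<bar>p (xs i) (xs j) - r\<bar> < \<epsilon>)"

definition pm_cauchy :: "('a \<Rightarrow> 'a \<Rightarrow> real) \<Rightarrow> (nat \<Rightarrow> 'a) \<Rightarrow> bool" where
  "pm_cauchy p xs \<longleftrightarrow> (\<exists>r. pm_cauchy_central p xs r)"

definition pm_special_limit :: "('a \<Rightarrow> 'a \<Rightarrow> real) \<Rightarrow> (nat \<Rightarrow> 'a) \<Rightarrow> 'a \<Rightarrow> bool" where
  "pm_special_limit p xs a \<longleftrightarrow>
     (\<exists>r. pm_cauchy_central p xs r \<and> pm_limit p xs a \<and> p a a = r)"

definition pm_complete :: "('a \<Rightarrow> 'a \<Rightarrow> real) \<Rightarrow> bool" where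
  "pm_complete p \<longleftrightarrow> (\<forall>xs. pm_cauchy p xs \<longrightarrow> (\<exists>a. pm_special_limit p xs a))"

definition cauchy_function_at :: "('a \<Rightarrow> 'a \<Rightarrow> real) \<Rightarrow> ('a \<Rightarrow> 'a) \<Rightarrow> 'a \<Rightarrow> bool" where
  "cauchy_function_at p f x0 \<longleftrightarrow> pm_cauchy p (\<lambda>i. (f ^^ i) x0)"

definition non_expansive :: "('a \<Rightarrow> 'a \<Rightarrow> real) \<Rightarrow> ('a \<Rightarrow> 'a) \<Rightarrow> bool" where
  "non_expansive p f \<longleftrightarrow> (\<forall>x y. p (f x) (f y) \<le> p x y)"

definition weakly_orbitally_continuous_at :: "('a \<Rightarrow> 'a \<Rightarrow> real) \<Rightarrow> ('a \<Rightarrow> 'a) \<Rightarrow> 'a \<Rightarrow> bool" where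
  "weakly_orbitally_continuous_at p f x0 \<longleftrightarrow>
     (\<forall>a. pm_special_limit p (\<lambda>i. (f ^^ i) x0) a \<longrightarrow> pm_limit p (\<lambda>i. (f ^^ i) x0) (f a))"

end

theory Submission
  imports Defs
begin

text \<open>Let \<open>a\<close> be a special limit of the orbit, with central distance \<open>r = p a a\<close>, and let
  \<open>b = f a\<close>, which is again a limit of the orbit. Passing to the limit in the triangle inequality
  along the orbit gives \<open>p a b \<le> p a a + p b b - r = p b b\<close> and \<open>r \<le> p b b\<close>, while
  non-expansiveness gives \<open>p b b \<le> p a a = r\<close>. Hence \<open>p a b\<close>, \<open>p a a\<close> and \<open>p b b\<close> coincide,
  i.e. \<open>a = b\<close>.\<close>

lemma partial_metric_eqI:
  assumes "partial_metric p" "p a b \<le> p a a" "p a b \<le> p b b"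
  shows "a = b"
proof -
  have "p a a \<le> p a b" "p b b \<le> p b a" "p b a = p a b"
    using assms(1) unfolding partial_metric_def by blast+
  then have "p a a = p a b \<and> p a b = p b b"
    using assms(2,3) by linarith
  then show ?thesis
    using assms(1) unfolding partial_metric_def by blast
qed

lemma pm_limit_eventually:
  assumes "pm_limit p xs a" "e > 0"
  shows "eventually (\<lambda>i. p a (xs i) < p a a + e) sequentially"
proof -
  obtain N where "\<forall>i>N. p a (xs i) - p a a < e"
    using assms unfolding pm_limit_def by blast
  then show ?thesis
    unfolding eventually_sequentially by (intro exI[of _ "Suc N"]) (auto simp: Suc_le_eq)
qed

lemma pm_cauchy_central_diagonal_eventually:
  assumes "pm_cauchy_central p xs r" "e > 0"
  shows "eventually (\<lambda>i. r < p (xs i) (xs i) + e) sequentially"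
proof -
  obtain N where "\<forall>i j. i \<ge> j \<and> j > N \<longrightarrow> \<bar>p (xs i) (xs j) - r\<bar> < e"
    using assms unfolding pm_cauchy_central_def by blast
  then have "\<forall>i\<ge>Suc N. \<bar>p (xs i) (xs i) - r\<bar> < e"
    by (simp add: Suc_le_eq)
  then show ?thesis
    unfolding eventually_sequentially by (intro exI[of _ "Suc N"]) auto
qed

lemma pm_limit_central_distance_le:
  assumes "partial_metric p" "pm_cauchy_central p xs r" "pm_limit p xs b"
  shows "r \<le> p b b"
proof (rule field_le_epsilon)
  fix e :: real
  assume "e > 0"
  then have "eventually (\<lambda>i. r < p (xs i) (xs i) + e / 3 \<and> p b (xs i) < p b b + e / 3) sequentially"
    using assms(2,3) by (intro eventually_conj pm_limit_eventually
        pm_cauchy_central_diagonal_eventually) auto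
  then obtain i where i: "r < p (xs i) (xs i) + e / 3" "p b (xs i) < p b b + e / 3"
    using eventually_happens'[OF sequentially_bot] by blast
  have "p (xs i) (xs i) \<le> p (xs i) b + p b (xs i) - p b b" "p (xs i) b = p b (xs i)"
    using assms(1) unfolding partial_metric_def by blast+
  then show "r \<le> p b b + e"
    using i by linarith
qed

lemma pm_limits_distance_le:
  assumes "partial_metric p" "pm_cauchy_central p xs r" "pm_limit p xs a" "pm_limit p xs b"
  shows "p a b \<le> p a a + p b b - r"
proof (rule field_le_epsilon)
  fix e :: real
  assume "e > 0"
  then have "eventually (\<lambda>i. r < p (xs i) (xs i) + e / 3 \<and> p a (xs i) < p a a + e / 3
      \<and> p b (xs i) < p b b + e / 3) sequentially"
    using assms(2-4) by (intro eventually_conj pm_limit_eventually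
        pm_cauchy_central_diagonal_eventually) auto
  then obtain i where i: "r < p (xs i) (xs i) + e / 3" "p a (xs i) < p a a + e / 3"
      "p b (xs i) < p b b + e / 3"
    using eventually_happens'[OF sequentially_bot] by blast
  have "p a b \<le> p a (xs i) + p (xs i) b - p (xs i) (xs i)" "p (xs i) b = p b (xs i)"
    using assms(1) unfolding partial_metric_def by blast+
  then show "p a b \<le> p a a + p b b - r + e"
    using i by linarith
qed

theorem theorem7p7:
  fixes p :: "'a \<Rightarrow> 'a \<Rightarrow> real" and f :: "'a \<Rightarrow> 'a" and x0 :: 'a
  assumes "partial_metric p"
    and "pm_complete p"
    and "cauchy_function_at p f x0"
    and "non_expansive p f"
    and "weakly_orbitally_continuous_at p f x0"
  shows "\<exists>x. f x = x"
proof -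
  define xs where "xs = (\<lambda>i. (f ^^ i) x0)"
  obtain a where special: "pm_special_limit p xs a"
    using assms(2,3) unfolding pm_complete_def cauchy_function_at_def xs_def by blast
  then obtain r where central: "pm_cauchy_central p xs r" and "pm_limit p xs a" "p a a = r"
    unfolding pm_special_limit_def by blast
  moreover have "pm_limit p xs (f a)"
    using assms(5) special unfolding weakly_orbitally_continuous_at_def xs_def by blast
  ultimately have "p a (f a) \<le> p (f a) (f a)" "r \<le> p (f a) (f a)"
    using pm_limits_distance_le[OF assms(1) central] pm_limit_central_distance_le[OF assms(1) central]
    by fastforce+
  moreover have "p (f a) (f a) \<le> p a a"
    using assms(4) unfolding non_expansive_def by blast
  ultimately have "a = f a"
    using \<open>p a a = r\<close> by (intro partial_metric_eqI[OF assms(1)]) linarith+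
  then show ?thesis
    by metis
qed

end
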